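(* Let $r\ge1$ and let $\ell\ge 2^r+1$ (with $\ell$ odd). There exists $m_0=m_0(r,\ell)$ such that for every $m\ge m_0$ the graph $H_{m,r}$ is $(C_\ell,r)$-Ramsey.
   Context: $H_{m,r}$ is the graph on pairwise disjoint vertex sets $V_1,\dots,V_{2^r+1}$, each of size $m$, whose edges are: a perfect matching between $V_{2i-1}$ and $V_{2i}$ for each $1\le i\le 2^{r-1}$, and all possible edges between $V_i$ and $V_j$ for every other pair $\{i,j\}$ of distinct indices (no edges inside any $V_i$). A graph $G$ is $(H,r)$-Ramsey if every colouring of its edges with $r$ colours contains a monochromatic copy of $H$. $C_\ell$ is the cycle of length $\ell$. *)

theory Defs
  imports Main
begin

text \<open>Vertices of H_{m,r}: pairs (i, a) with part index 1 <= i <= 2^r+1 and a < m,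
  so V_i = {(i,a) | a < m} has size m.\<close>
definition H_verts :: "nat \<Rightarrow> nat \<Rightarrow> (nat \<times> nat) set" where
  "H_verts m r = {1..2^r+1} \<times> {0..<m}"

definition matched_pair :: "nat \<Rightarrow> nat \<Rightarrow> nat \<Rightarrow> bool" where
  "matched_pair r i j \<longleftrightarrow>
     (\<exists>k. 1 \<le> k \<and> k \<le> 2^(r-1) \<and> ({i, j} = {2*k-1, 2*k}))"

text \<open>Adjacency of H_{m,r}: no edges inside a part; the perfect matching between
  V_{2k-1} and V_{2k} is (2k-1,a)--(2k,a); complete bipartite between all other pairs.\<close>
definition H_adj :: "nat \<Rightarrow> nat \<Rightarrow> nat \<times> nat \<Rightarrow> nat \<times> nat \<Rightarrow> bool" where
  "H_adj m r u v \<longleftrightarrow> u \<in> H_verts m r \<and> v \<in> H_verts m r \<and> fst u \<noteq> fst v \<and>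
     (matched_pair r (fst u) (fst v) \<longrightarrow> snd u = snd v)"

definition has_mono_cycle ::
  "'v set \<Rightarrow> ('v \<Rightarrow> 'v \<Rightarrow> bool) \<Rightarrow> ('v set \<Rightarrow> nat) \<Rightarrow> nat \<Rightarrow> bool" where
  "has_mono_cycle V E c l \<longleftrightarrow>
     (\<exists>f col. inj_on f {0..<l} \<and> f ` {0..<l} \<subseteq> V \<and>
        (\<forall>k<l. E (f k) (f ((k+1) mod l)) \<and> c {f k, f ((k+1) mod l)} = col))"

definition cycle_ramsey :: "'v set \<Rightarrow> ('v \<Rightarrow> 'v \<Rightarrow> bool) \<Rightarrow> nat \<Rightarrow> nat \<Rightarrow> bool" where
  "cycle_ramsey V E l r \<longleftrightarrow>
     (\<forall>c :: 'v set \<Rightarrow> nat. (\<forall>u v. E u v \<longrightarrow> c {u, v} < r) \<longrightarrow> has_mono_cycle V E c l)"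

end

theory Submission
  imports Defs "HOL-Library.Ramsey"
begin

(* Colour each pair a < b of indices by the whole pattern of colours of the edges (p, a)(q, b),
   p and q ranging over the pairs of parts not joined by the matching; Ramsey's theorem yields a
   large index set H on which this pattern is constant.  Giving each matched pair of parts its own
   block of T consecutive elements of H, the copies of the parts are coloured according to a
   colouring of the complete graph on the 2^r + 1 parts.  An r-colouring of a complete graph on more
   than 2^r vertices has a monochromatic odd cycle: otherwise every colour class is bipartite, and
   halving the vertex set r times leaves two vertices joined in no colour.  Rotate this cycle until
   its closing edge joins two different blocks; all copies of the endpoints of that edge are then
   joined in the same colour, and zigzagging between them pads the lifted cycle to length l. *)

section \<open>Odd cycles in coloured complete graphs\<close>

definition is_cycle :: "('a \<Rightarrow> 'a \<Rightarrow> bool) \<Rightarrow> (nat \<Rightarrow> 'a) \<Rightarrow> nat \<Rightarrow> bool" where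
  "is_cycle E x k \<longleftrightarrow> inj_on x {..<k} \<and> (\<forall>j<k. E (x j) (x (Suc j mod k)))"

definition colour_class :: "'a set \<Rightarrow> ('a set \<Rightarrow> nat) \<Rightarrow> nat \<Rightarrow> 'a \<Rightarrow> 'a \<Rightarrow> bool" where
  "colour_class S \<kappa> i u v \<longleftrightarrow> u \<in> S \<and> v \<in> S \<and> u \<noteq> v \<and> \<kappa> {u, v} = i"

lemma symp_colour_class: "symp (colour_class S \<kappa> i)"
  by (auto intro: sympI simp: colour_class_def insert_commute)

lemma relpowp_symp:
  assumes "symp E" "(E ^^ n) x y"
  shows "(E ^^ n) y x"
  using assms(2)
proof (induction n arbitrary: y)
  case 0
  then show ?case by auto
next
  case (Suc n)
  then obtain z where "(E ^^ n) x z" "E z y" by (auto elim: relpowp_Suc_E)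
  then show ?case
    using Suc.IH sympD[OF assms(1)] relpowp_Suc_I2 by metis
qed

lemma relpowp_segment:
  assumes "\<forall>t<n. E (f t) (f (Suc t))" "i \<le> j" "j \<le> n"
  shows "(E ^^ (j - i)) (f i) (f j)"
  unfolding relpowp_fun_conv
  using assms by (intro exI[of _ "\<lambda>t. f (i + t)"]) auto

lemma walk_lengths_same_parity:
  assumes "symp E" and no_odd: "\<And>k z. (E ^^ k) z z \<Longrightarrow> even k"
    and "(E ^^ a) x y" "(E ^^ b) x y"
  shows "even (a + b)"
  using no_odd relpowp_trans[OF assms(3) relpowp_symp[OF assms(1,4)]] .

lemma two_colouring_if_no_odd_closed_walk:
  assumes "symp E" and no_odd: "\<And>k z. (E ^^ k) z z \<Longrightarrow> even k"
  shows "\<exists>\<sigma> :: 'a \<Rightarrow> bool. \<forall>u v. E u v \<longrightarrow> \<sigma> u \<noteq> \<sigma> v"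
proof -
  define rep where "rep v = (SOME z. E\<^sup>*\<^sup>* z v)" for v
  \<comment> \<open>the parity of the walks from a fixed vertex of the component of v to v\<close>
  define \<sigma> where "\<sigma> v \<longleftrightarrow> (\<exists>k. odd k \<and> (E ^^ k) (rep v) v)" for v
  have \<sigma>_parity: "\<sigma> v \<longleftrightarrow> odd a" if a: "(E ^^ a) (rep v) v" for v a
  proof
    assume "\<sigma> v"
    then obtain k where "odd k" "(E ^^ k) (rep v) v"
      unfolding \<sigma>_def by blast
    then show "odd a"
      using walk_lengths_same_parity[OF assms _ a] by simp
  next
    assume "odd a"
    then show "\<sigma> v"
      unfolding \<sigma>_def using a by blast
  qed
  have "\<sigma> u \<noteq> \<sigma> v" if uv: "E u v" for u v
  proof -
    have "E\<^sup>*\<^sup>* z u \<longleftrightarrow> E\<^sup>*\<^sup>* z v" for z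
      using rtranclp.rtrancl_into_rtrancl[of E z u v] rtranclp.rtrancl_into_rtrancl[of E z v u]
        uv sympD[OF assms(1) uv] by blast
    then have rep_eq: "rep u = rep v"
      unfolding rep_def by simp
    have "E\<^sup>*\<^sup>* (rep u) u"
      unfolding rep_def by (rule someI) (rule rtranclp.rtrancl_refl)
    then obtain a where a: "(E ^^ a) (rep u) u"
      by (auto dest: rtranclp_imp_relpowp)
    have "(E ^^ Suc a) (rep v) v"
      using relpowp_Suc_I[OF a uv] rep_eq by simp
    then show ?thesis
      using \<sigma>_parity[OF a] \<sigma>_parity[of "Suc a" v] by simp
  qed
  then show ?thesis
    by blast
qed

lemma odd_closed_walk_in_coloured_complete_graph:
  assumes "finite S" "2 ^ r < card S" "\<And>u v. u \<in> S \<Longrightarrow> v \<in> S \<Longrightarrow> u \<noteq> v \<Longrightarrow> \<kappa> {u, v} < r"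
  shows "\<exists>i k z. odd k \<and> (colour_class S \<kappa> i ^^ k) z z"
  using assms
proof (induction r arbitrary: S)
  case 0
  then obtain u v where "u \<in> S" "v \<in> S" "u \<noteq> v"
    by (metis One_nat_def card_le_Suc0_iff_eq not_le power_0)
  then show ?case
    using "0.prems"(3)[of u v] by simp
next
  case (Suc r)
  show ?case
  proof (cases "\<exists>k z. odd k \<and> (colour_class S \<kappa> r ^^ k) z z")
    case True
    then show ?thesis
      by auto
  next
    case False
    \<comment> \<open>then colour r is bipartite, and one side has more than 2^r vertices and avoids colour r\<close>
    then have no_odd: "even k" if "(colour_class S \<kappa> r ^^ k) z z" for k z
      using that by auto
    have "\<exists>\<sigma> :: 'a \<Rightarrow> bool. \<forall>u v. colour_class S \<kappa> r u v \<longrightarrow> \<sigma> u \<noteq> \<sigma> v"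
      using symp_colour_class no_odd by (rule two_colouring_if_no_odd_closed_walk)
    then obtain \<sigma> :: "'a \<Rightarrow> bool" where \<sigma>: "\<And>u v. colour_class S \<kappa> r u v \<Longrightarrow> \<sigma> u \<noteq> \<sigma> v"
      by auto
    have "card {v\<in>S. \<sigma> v} + card {v\<in>S. \<not> \<sigma> v} = card S"
      using Suc.prems(1) by (subst card_Un_disjoint[symmetric]) (auto intro: arg_cong[where f = card])
    then have "2 ^ r < card {v\<in>S. \<sigma> v = True} \<or> 2 ^ r < card {v\<in>S. \<sigma> v = False}"
      using Suc.prems(2) by (simp, linarith)
    then obtain b where b: "2 ^ r < card {v\<in>S. \<sigma> v = b}"
      by blast
    have "\<kappa> {u, v} < r" if "u \<in> {v\<in>S. \<sigma> v = b}" "v \<in> {v\<in>S. \<sigma> v = b}" "u \<noteq> v" for u v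
      using that Suc.prems(3)[of u v] \<sigma>[of u v] unfolding colour_class_def by fastforce
    then obtain i k z where "odd k" and walk: "(colour_class {v\<in>S. \<sigma> v = b} \<kappa> i ^^ k) z z"
      using Suc.IH[OF _ b] Suc.prems(1) by auto
    have "colour_class {v\<in>S. \<sigma> v = b} \<kappa> i u v \<Longrightarrow> colour_class S \<kappa> i u v" for u v
      unfolding colour_class_def by blast
    then have "(colour_class S \<kappa> i ^^ k) z z"
      using walk by (rule relpowp_mono)
    then show ?thesis
      using \<open>odd k\<close> by auto
  qed
qed

lemma odd_cycle_if_odd_closed_walk:
  assumes "(E ^^ k) z z" "odd k"
  shows "\<exists>x k'. odd k' \<and> is_cycle E x k'"
  using assms
proof (induction k arbitrary: z rule: less_induct)
  case (less k)
  obtain x where x: "x 0 = z" "x k = z" "\<forall>t<k. E (x t) (x (Suc t))"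
    using less.prems(1) unfolding relpowp_fun_conv by blast
  show ?case
  proof (cases "inj_on x {..<k}")
    case True
    have "E (x t) (x (Suc t mod k))" if "t < k" for t
      using x that by (cases "Suc t = k") auto
    then show ?thesis
      using True less.prems(2) unfolding is_cycle_def by blast
  next
    case False
    \<comment> \<open>a repeated vertex splits the walk into two shorter closed walks, one of them odd\<close>
    then obtain a b where "a < k" "b < k" "a \<noteq> b" "x a = x b"
      unfolding inj_on_def by auto
    then obtain i j where ij: "i < j" "j < k" "x i = x j"
      using that[of a b] that[of b a] by (cases "a < b") auto
    have short: "(E ^^ (j - i)) (x j) (x j)"
      using relpowp_segment[of k E x i j] x(3) ij by simp
    have "(E ^^ (k - j)) (x j) z" "(E ^^ i) z (x i)"
      using relpowp_segment[of k E x j k] relpowp_segment[of k E x 0 i] x ij by simp_all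
    from relpowp_trans[OF this] have "(E ^^ (k - j + i)) (x j) (x j)"
      using ij(3) by simp
    moreover have "k - j + i = k - (j - i)"
      using ij by simp
    ultimately have rest: "(E ^^ (k - (j - i))) (x j) (x j)"
      by simp
    have "(j - i) + (k - (j - i)) = k"
      using ij by simp
    then have "odd (j - i) \<or> odd (k - (j - i))"
      using less.prems(2) by (metis even_add)
    then show ?thesis
    proof
      assume "odd (j - i)"
      then show ?thesis
        using less.IH[OF _ short] ij by simp
    next
      assume "odd (k - (j - i))"
      then show ?thesis
        using less.IH[OF _ rest] ij by simp
    qed
  qed
qed

lemma odd_cycle_in_coloured_complete_graph:
  assumes "finite S" "2 ^ r < card S" "\<And>u v. u \<in> S \<Longrightarrow> v \<in> S \<Longrightarrow> u \<noteq> v \<Longrightarrow> \<kappa> {u, v} < r"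
  obtains i x k where "odd k" "3 \<le> k" "k \<le> card S" "is_cycle (colour_class S \<kappa> i) x k"
proof -
  have "\<exists>i k z. odd k \<and> (colour_class S \<kappa> i ^^ k) z z"
    using assms by (rule odd_closed_walk_in_coloured_complete_graph)
  then obtain i k z where "(colour_class S \<kappa> i ^^ k) z z" "odd k"
    by auto
  from odd_cycle_if_odd_closed_walk[OF this]
  obtain x k' where "odd k'" and cycle: "is_cycle (colour_class S \<kappa> i) x k'"
    by auto
  have edge: "colour_class S \<kappa> i (x j) (x (Suc j mod k'))" if "j < k'" for j
    using cycle that unfolding is_cycle_def by blast
  have "k' \<noteq> 1"
    using edge[of 0] odd_pos[OF \<open>odd k'\<close>] unfolding colour_class_def by auto
  moreover have "k' \<noteq> 0" "k' \<noteq> 2"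
    using \<open>odd k'\<close> by presburger+
  ultimately have "3 \<le> k'"
    by linarith
  have "x ` {..<k'} \<subseteq> S"
    using edge unfolding colour_class_def by auto
  then have "k' \<le> card S"
    using card_inj_on_le[of x "{..<k'}" S] cycle assms(1) unfolding is_cycle_def by simp
  show thesis
    using \<open>odd k'\<close> \<open>3 \<le> k'\<close> \<open>k' \<le> card S\<close> cycle by (rule that)
qed

lemma inj_on_add_mod:
  fixes d k :: nat
  shows "inj_on (\<lambda>j. (j + d) mod k) {..<k}"
proof -
  have "i = j" if "i \<le> j" "j < k" "(i + d) mod k = (j + d) mod k" for i j :: nat
  proof (rule ccontr)
    assume "i \<noteq> j"
    have "k dvd (j + d) - (i + d)"
      using that mod_eq_dvd_iff_nat[of "i + d" "j + d" k] by simp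
    then have "k \<le> j - i"
      using \<open>i \<noteq> j\<close> that(1) by (simp add: dvd_imp_le)
    then show False
      using that(2) by linarith
  qed
  then show ?thesis
    by (intro inj_onI) (metis lessThan_iff nat_le_linear)
qed

lemma is_cycle_rotate:
  assumes "is_cycle E x k"
  shows "is_cycle E (\<lambda>j. x ((j + d) mod k)) k"
  unfolding is_cycle_def
proof
  have "(\<lambda>j. (j + d) mod k) ` {..<k} \<subseteq> {..<k}"
    by auto
  then show "inj_on (\<lambda>j. x ((j + d) mod k)) {..<k}"
    using comp_inj_on[OF inj_on_add_mod, of x d k] assms inj_on_subset
    unfolding is_cycle_def o_def by blast
  show "\<forall>j<k. E (x ((j + d) mod k)) (x ((Suc j mod k + d) mod k))"
  proof (intro allI impI)
    fix j assume "j < k"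
    then have "(j + d) mod k < k"
      by simp
    then have "E (x ((j + d) mod k)) (x (Suc ((j + d) mod k) mod k))"
      using assms unfolding is_cycle_def by blast
    moreover have "Suc ((j + d) mod k) mod k = (Suc j mod k + d) mod k"
      by (simp add: mod_simps)
    ultimately show "E (x ((j + d) mod k)) (x ((Suc j mod k + d) mod k))"
      by simp
  qed
qed

lemma is_cycle_rotate_to_crossing_edge:
  assumes "is_cycle E x k" "3 \<le> k"
    and at_most_two: "\<And>a b c. a \<noteq> b \<Longrightarrow> b \<noteq> c \<Longrightarrow> a \<noteq> c \<Longrightarrow> g a = g b \<Longrightarrow> g b = g c \<Longrightarrow> False"
  obtains y where "is_cycle E y k" "g (y (k - 1)) \<noteq> g (y 0)"
proof -
  have "x a \<noteq> x b" if "a < k" "b < k" "a \<noteq> b" for a b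
    using assms(1) that unfolding is_cycle_def inj_on_def by blast
  then have distinct: "x 0 \<noteq> x 1" "x 1 \<noteq> x 2" "x 0 \<noteq> x 2"
    using assms(2) by auto
  have rotate: "g (x (d - 1)) \<noteq> g (x d) \<Longrightarrow> d = 1 \<or> d = 2 \<Longrightarrow> thesis" for d
  proof -
    assume d: "g (x (d - 1)) \<noteq> g (x d)" "d = 1 \<or> d = 2"
    then have "k - 1 + d = (d - 1) + k" "d - 1 < k" "d < k"
      using assms(2) by auto
    then have "(k - 1 + d) mod k = d - 1" "d mod k = d"
      by (metis mod_add_self2 mod_less) (simp add: \<open>d < k\<close>)
    then show thesis
      using that[OF is_cycle_rotate[OF assms(1), of d]] d(1) by simp
  qed
  show thesis
    using rotate[of 1] rotate[of 2] at_most_two[OF distinct] by fastforce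
qed

section \<open>Padding a cycle through a complete bipartite graph\<close>

definition zigzag :: "(nat \<Rightarrow> 'v) \<Rightarrow> nat \<Rightarrow> (nat \<Rightarrow> 'v) \<Rightarrow> (nat \<Rightarrow> 'v) \<Rightarrow> nat \<Rightarrow> 'v" where
  "zigzag x k a b t =
     (if t < k then x t else if even (t - k) then a ((t - k) div 2) else b ((t - k) div 2))"

lemma zigzag_tail: "zigzag x k a b (k + j) = (if even j then a (j div 2) else b (j div 2))"
  by (simp add: zigzag_def)

lemma zigzag_tail_mem:
  assumes "j < 2 * n"
  shows "zigzag x k a b (k + j) \<in> (if even j then a ` {..<n} else b ` {..<n})"
  using assms unfolding zigzag_tail by (auto simp: div_less_iff_less_mult)

lemma zigzag_image:
  "zigzag x k a b ` {..<k + 2 * n} \<subseteq> x ` {..<k} \<union> a ` {..<n} \<union> b ` {..<n}"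
proof (rule image_subsetI)
  fix t assume t: "t \<in> {..<k + 2 * n}"
  show "zigzag x k a b t \<in> x ` {..<k} \<union> a ` {..<n} \<union> b ` {..<n}"
  proof (cases "t < k")
    case True
    then show ?thesis
      by (simp add: zigzag_def)
  next
    case False
    then obtain j where "t = k + j" "j < 2 * n"
      using t by (intro that[of "t - k"]) auto
    then show ?thesis
      using zigzag_tail_mem[of j n x k a b] by (auto split: if_splits)
  qed
qed

lemma inj_on_zigzag_tail:
  assumes "inj_on a {..<n}" "inj_on b {..<n}" "a ` {..<n} \<inter> b ` {..<n} = {}"
  shows "inj_on (\<lambda>j. zigzag x k a b (k + j)) {..<2 * n}"
proof (rule inj_onI)
  fix i j assume ij: "i \<in> {..<2 * n}" "j \<in> {..<2 * n}"
    and eq: "zigzag x k a b (k + i) = zigzag x k a b (k + j)"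
  have "i div 2 < n" "j div 2 < n"
    using ij by (auto simp: div_less_iff_less_mult)
  then have "even i = even j \<and> i div 2 = j div 2"
    using eq assms unfolding zigzag_tail by (auto split: if_splits simp: inj_on_eq_iff)
  then show "i = j"
    by (metis div_mult_mod_eq mod2_eq_if)
qed

lemma inj_on_zigzag:
  assumes "inj_on x {..<k}" "inj_on a {..<n}" "inj_on b {..<n}"
    and "x ` {..<k} \<inter> a ` {..<n} = {}" "x ` {..<k} \<inter> b ` {..<n} = {}" "a ` {..<n} \<inter> b ` {..<n} = {}"
  shows "inj_on (zigzag x k a b) {..<k + 2 * n}"
proof (rule inj_onI)
  fix t t' assume t: "t \<in> {..<k + 2 * n}" "t' \<in> {..<k + 2 * n}"
    and eq: "zigzag x k a b t = zigzag x k a b t'"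
  have head: "zigzag x k a b t = x t" if "t < k" for t
    using that by (simp add: zigzag_def)
  have head_tail_disjoint: "x t \<noteq> zigzag x k a b (k + j)" if "t < k" "j < 2 * n" for t j
    using zigzag_tail_mem[OF that(2), of x k a b] assms(4,5) that(1) by (auto split: if_splits)
  have head_or_tail: "t < k \<or> (\<exists>j. t = k + j \<and> j < 2 * n)" if "t \<in> {..<k + 2 * n}" for t
    using that by (cases "t < k") (auto intro: exI[of _ "t - k"])
  consider "t < k" "t' < k" | j where "t < k" "t' = k + j" "j < 2 * n"
    | j where "t = k + j" "j < 2 * n" "t' < k" | i j where "t = k + i" "t' = k + j" "i < 2 * n" "j < 2 * n"
    using head_or_tail[OF t(1)] head_or_tail[OF t(2)] by blast
  then show "t = t'"
  proof cases
    case 1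
    then show ?thesis
      using eq assms(1) head by (simp add: inj_on_eq_iff)
  next
    case 2
    then show ?thesis
      using eq head head_tail_disjoint by metis
  next
    case 3
    then show ?thesis
      using eq head head_tail_disjoint by metis
  next
    case 4
    then show ?thesis
      using eq inj_onD[OF inj_on_zigzag_tail[OF assms(2,3,6)]] by auto
  qed
qed

lemma zigzag_alternates:
  assumes "0 < k" "i \<le> 2 * n"
  shows "zigzag x k a b (k - 1 + i) \<in> (if even i then insert (x (k - 1)) (b ` {..<n}) else a ` {..<n})"
proof (cases i)
  case 0
  then show ?thesis
    using assms(1) by (simp add: zigzag_def)
next
  case (Suc j)
  then have "k - 1 + i = k + j" "j < 2 * n"
    using assms by auto
  then show ?thesis
    using zigzag_tail_mem[of j n x k a b] Suc by auto
qed

lemma zigzag_edges: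
  assumes path: "\<And>j. Suc j < k \<Longrightarrow> F (x j) (x (Suc j))"
    and complete: "\<And>u v. u \<in> insert (x 0) (a ` {..<n}) \<Longrightarrow> v \<in> insert (x (k - 1)) (b ` {..<n}) \<Longrightarrow> F u v \<and> F v u"
    and "0 < k"
  shows "\<forall>t<k + 2 * n. F (zigzag x k a b t) (zigzag x k a b (Suc t mod (k + 2 * n)))"
proof (intro allI impI)
  define z where "z = zigzag x k a b"
  fix t assume t: "t < k + 2 * n"
  show "F (z t) (z (Suc t mod (k + 2 * n)))"
  proof (cases "Suc t < k")
    case True
    then show ?thesis
      using path unfolding z_def zigzag_def by simp
  next
    case False
    then obtain i where i: "t = k - 1 + i" "i \<le> 2 * n"
      using t by (intro that[of "t - (k - 1)"]) auto
    show ?thesis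
    proof (cases "i < 2 * n")
      case True
      then have "Suc t mod (k + 2 * n) = k - 1 + Suc i"
        using i \<open>0 < k\<close> by simp
      then show ?thesis
        using zigzag_alternates[OF \<open>0 < k\<close>, of i n x a b] zigzag_alternates[OF \<open>0 < k\<close>, of "Suc i" n x a b]
          True i complete unfolding z_def by (auto split: if_splits)
    next
      case False
      then have "Suc t mod (k + 2 * n) = 0" "even i"
        using i \<open>0 < k\<close> by auto
      moreover have "z 0 = x 0"
        using \<open>0 < k\<close> unfolding z_def zigzag_def by simp
      ultimately show ?thesis
        using zigzag_alternates[OF \<open>0 < k\<close>, of i n x a b] i complete unfolding z_def by auto
    qed
  qed
qed

lemma is_cycle_zigzag:
  assumes "inj_on x {..<k}" "inj_on a {..<n}" "inj_on b {..<n}"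
    and "x ` {..<k} \<inter> a ` {..<n} = {}" "x ` {..<k} \<inter> b ` {..<n} = {}" "a ` {..<n} \<inter> b ` {..<n} = {}"
    and "\<And>j. Suc j < k \<Longrightarrow> F (x j) (x (Suc j))"
    and "\<And>u v. u \<in> insert (x 0) (a ` {..<n}) \<Longrightarrow> v \<in> insert (x (k - 1)) (b ` {..<n}) \<Longrightarrow> F u v \<and> F v u"
    and "0 < k"
  shows "is_cycle F (zigzag x k a b) (k + 2 * n)"
  unfolding is_cycle_def
proof
  show "inj_on (zigzag x k a b) {..<k + 2 * n}"
    by (rule inj_on_zigzag) (fact assms)+
  show "\<forall>t<k + 2 * n. F (zigzag x k a b t) (zigzag x k a b (Suc t mod (k + 2 * n)))"
    by (rule zigzag_edges) (fact assms)+
qed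

lemma has_mono_cycleI:
  assumes "x ` {..<l} \<subseteq> V" "is_cycle (\<lambda>u v. E u v \<and> c {u, v} = col) x l"
  shows "has_mono_cycle V E c l"
  using assms unfolding has_mono_cycle_def is_cycle_def by (auto simp: atLeast0LessThan)

section \<open>Canonical index sets for colourings of H_{m,r}\<close>

abbreviation parts :: "nat \<Rightarrow> nat set" where
  "parts r \<equiv> {1..2 ^ r + 1}"

(* Parts 2k - 1 and 2k, which are joined by the matching, form block k; the last part 2^r + 1 is
   alone in its block. *)
definition block :: "nat \<Rightarrow> nat" where
  "block p = (p + 1) div 2"

lemma block_eq_if_matched_pair:
  assumes "matched_pair r p q"
  shows "block p = block q"
proof -
  obtain k where "1 \<le> k" "{p, q} = {2 * k - 1, 2 * k}"
    using assms unfolding matched_pair_def by blast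
  then have "p = 2 * k - 1 \<and> q = 2 * k \<or> p = 2 * k \<and> q = 2 * k - 1"
    by (simp add: doubleton_eq_iff)
  then show ?thesis
    using \<open>1 \<le> k\<close> unfolding block_def by auto
qed

lemma block_at_most_two:
  assumes "a \<noteq> b" "b \<noteq> c" "a \<noteq> c" "block a = block b" "block b = block c"
  shows False
proof -
  have parity: "x = 2 * block x \<or> x + 1 = 2 * block x" for x
    unfolding block_def by presburger
  show False
    using parity[of a] parity[of b] parity[of c] assms by linarith
qed

lemma H_adj_if_blocks_differ:
  assumes "p \<in> parts r" "q \<in> parts r" "block p \<noteq> block q" "a < m" "b < m"
  shows "H_adj m r (p, a) (q, b)"
  using assms block_eq_if_matched_pair[of r p q] unfolding H_adj_def H_verts_def by auto

lemma H_adj_same_index: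
  assumes "p \<in> parts r" "q \<in> parts r" "p \<noteq> q" "a < m"
  shows "H_adj m r (p, a) (q, a)"
  using assms unfolding H_adj_def H_verts_def by auto

definition canonical :: "nat \<Rightarrow> ((nat \<times> nat) set \<Rightarrow> nat) \<Rightarrow> nat set \<Rightarrow> bool" where
  "canonical r c H \<longleftrightarrow>
     (\<forall>p\<in>parts r. \<forall>q\<in>parts r. block p \<noteq> block q \<longrightarrow>
        (\<forall>a\<in>H. \<forall>b\<in>H. \<forall>a'\<in>H. \<forall>b'\<in>H. a < b \<longrightarrow> a' < b' \<longrightarrow>
           c {(p, a), (q, b)} = c {(p, a'), (q, b')}))"

lemma canonicalD:
  assumes "canonical r c H" "p \<in> parts r" "q \<in> parts r" "block p \<noteq> block q"
    and "a \<in> H" "b \<in> H" "a' \<in> H" "b' \<in> H" "a < b" "a' < b'"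
  shows "c {(p, a), (q, b)} = c {(p, a'), (q, b')}"
  using assms unfolding canonical_def by blast

lemma ramsey_pairs_finitely_many_colours:
  assumes "finite C"
  shows "\<exists>N :: nat. \<forall>F \<in> [{..<N}]\<^bsup>2\<^esup> \<rightarrow> C. \<exists>H \<subseteq> {..<N}. card H = M \<and> (\<forall>X\<in>[H]\<^bsup>2\<^esup>. \<forall>Y\<in>[H]\<^bsup>2\<^esup>. F X = F Y)"
proof -
  obtain h where h: "bij_betw h {0..<card C} C"
    using ex_bij_betw_nat_finite[OF assms] by blast
  obtain N :: nat where N: "partn_lst {..<N} (replicate (card C) M) 2"
    using ramsey_full[of "replicate (card C) M" 2] by blast
  show ?thesis
  proof (rule exI[of _ N], intro ballI)
    fix F assume F: "F \<in> [{..<N}]\<^bsup>2\<^esup> \<rightarrow> C"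
    let ?index = "inv_into {0..<card C} h"
    have "?index \<circ> F \<in> [{..<N}]\<^bsup>2\<^esup> \<rightarrow> {..<card C}"
      using F bij_betwE[OF bij_betw_inv_into[OF h]] by auto
    then obtain i H where "i < length (replicate (card C) M)" "H \<in> nsets {..<N} (replicate (card C) M ! i)"
        and hom: "(?index \<circ> F) ` [H]\<^bsup>2\<^esup> \<subseteq> {i}"
      by (rule partn_lstE[OF N _ length_replicate])
    then have H: "H \<subseteq> {..<N}" "card H = M"
      by (auto simp: nsets_def)
    have "F X = F Y" if "X \<in> [H]\<^bsup>2\<^esup>" "Y \<in> [H]\<^bsup>2\<^esup>" for X Y
    proof (rule inv_into_injective)
      show "?index (F X) = ?index (F Y)"
        using hom that by auto
      show "F X \<in> h ` {0..<card C}" "F Y \<in> h ` {0..<card C}"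
        using that F nsets_mono[OF H(1)] h unfolding bij_betw_def by auto
    qed
    then show "\<exists>H \<subseteq> {..<N}. card H = M \<and> (\<forall>X\<in>[H]\<^bsup>2\<^esup>. \<forall>Y\<in>[H]\<^bsup>2\<^esup>. F X = F Y)"
      using H by blast
  qed
qed

lemma ramsey_simultaneous_pair_colourings:
  fixes D :: "'d set"
  assumes "finite D"
  shows "\<exists>N. \<forall>\<phi> :: 'd \<Rightarrow> nat \<Rightarrow> nat \<Rightarrow> nat.
           (\<forall>d\<in>D. \<forall>a b. a < b \<longrightarrow> b < N \<longrightarrow> \<phi> d a b < s) \<longrightarrow>
           (\<exists>H \<subseteq> {..<N}. card H = M \<and>
              (\<forall>d\<in>D. \<forall>a\<in>H. \<forall>b\<in>H. \<forall>a'\<in>H. \<forall>b'\<in>H. a < b \<longrightarrow> a' < b' \<longrightarrow> \<phi> d a b = \<phi> d a' b'))"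
proof -
  have "finite (D \<rightarrow>\<^sub>E {..<s})"
    using assms by (simp add: finite_PiE)
  from ramsey_pairs_finitely_many_colours[OF this, of M]
  obtain N :: nat where N: "\<forall>F \<in> [{..<N}]\<^bsup>2\<^esup> \<rightarrow> D \<rightarrow>\<^sub>E {..<s}.
      \<exists>H \<subseteq> {..<N}. card H = M \<and> (\<forall>X\<in>[H]\<^bsup>2\<^esup>. \<forall>Y\<in>[H]\<^bsup>2\<^esup>. F X = F Y)" ..
  show ?thesis
  proof (rule exI, intro allI impI)
    fix \<phi> :: "'d \<Rightarrow> nat \<Rightarrow> nat \<Rightarrow> nat"
    assume \<phi>: "\<forall>d\<in>D. \<forall>a b. a < b \<longrightarrow> b < N \<longrightarrow> \<phi> d a b < s"
    define pattern where "pattern X = restrict (\<lambda>d. \<phi> d (Min X) (Max X)) D" for X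
    have "pattern X \<in> D \<rightarrow>\<^sub>E {..<s}" if "X \<in> [{..<N}]\<^bsup>2\<^esup>" for X
      using that \<phi> unfolding ordered_nsets_2_eq pattern_def by (auto simp: restrict_PiE_iff)
    then obtain H where H: "H \<subseteq> {..<N}" "card H = M"
        and hom: "\<forall>X\<in>[H]\<^bsup>2\<^esup>. \<forall>Y\<in>[H]\<^bsup>2\<^esup>. pattern X = pattern Y"
      using N by blast
    have "\<phi> d a b = \<phi> d a' b'"
      if "d \<in> D" "a \<in> H" "b \<in> H" "a' \<in> H" "b' \<in> H" "a < b" "a' < b'" for d a b a' b'
    proof -
      have "pattern {a, b} = pattern {a', b'}"
        using hom that by simp
      from fun_cong[OF this, of d] show ?thesis
        using that unfolding pattern_def by simp
    qed
    then show "\<exists>H \<subseteq> {..<N}. card H = M \<and>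
        (\<forall>d\<in>D. \<forall>a\<in>H. \<forall>b\<in>H. \<forall>a'\<in>H. \<forall>b'\<in>H. a < b \<longrightarrow> a' < b' \<longrightarrow> \<phi> d a b = \<phi> d a' b')"
      using H by blast
  qed
qed

lemma canonical_subset_exists:
  "\<exists>N. \<forall>m\<ge>N. \<forall>c. (\<forall>u v. H_adj m r u v \<longrightarrow> c {u, v} < r) \<longrightarrow>
      (\<exists>H \<subseteq> {..<m}. card H = M \<and> canonical r c H)"
proof -
  define D where "D = {(p, q) \<in> parts r \<times> parts r. block p \<noteq> block q}"
  have "finite D"
    unfolding D_def by (rule finite_subset[of _ "parts r \<times> parts r"]) auto
  then obtain N where N: "\<forall>\<phi> :: nat \<times> nat \<Rightarrow> nat \<Rightarrow> nat \<Rightarrow> nat.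
      (\<forall>d\<in>D. \<forall>a b. a < b \<longrightarrow> b < N \<longrightarrow> \<phi> d a b < r) \<longrightarrow>
      (\<exists>H \<subseteq> {..<N}. card H = M \<and>
         (\<forall>d\<in>D. \<forall>a\<in>H. \<forall>b\<in>H. \<forall>a'\<in>H. \<forall>b'\<in>H. a < b \<longrightarrow> a' < b' \<longrightarrow> \<phi> d a b = \<phi> d a' b'))"
    using ramsey_simultaneous_pair_colourings[of D r M] by blast
  show ?thesis
  proof (rule exI, intro allI impI)
    fix m c assume "N \<le> m" and c: "\<forall>u v. H_adj m r u v \<longrightarrow> c {u, v} < r"
    define \<phi> where "\<phi> d a b = c {(fst d, a), (snd d, b)}" for d :: "nat \<times> nat" and a b
    have "\<phi> d a b < r" if d: "d \<in> D" "a < b" "b < N" for d a b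
    proof -
      obtain p q where "d = (p, q)" "p \<in> parts r" "q \<in> parts r" "block p \<noteq> block q"
        using d(1) unfolding D_def by auto
      then show ?thesis
        using c H_adj_if_blocks_differ[of p r q a m b] d \<open>N \<le> m\<close> unfolding \<phi>_def by auto
    qed
    then obtain H where H: "H \<subseteq> {..<N}" "card H = M"
        and hom: "\<forall>d\<in>D. \<forall>a\<in>H. \<forall>b\<in>H. \<forall>a'\<in>H. \<forall>b'\<in>H. a < b \<longrightarrow> a' < b' \<longrightarrow> \<phi> d a b = \<phi> d a' b'"
      using N[rule_format, of \<phi>] by auto
    have "canonical r c H"
      unfolding canonical_def
    proof (intro ballI impI)
      fix p q a b a' b'
      assume "p \<in> parts r" "q \<in> parts r" "block p \<noteq> block q"
        and ab: "a \<in> H" "b \<in> H" "a' \<in> H" "b' \<in> H" "a < b" "a' < b'"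
      then have "(p, q) \<in> D"
        unfolding D_def by simp
      from hom[rule_format, OF this ab] show "c {(p, a), (q, b)} = c {(p, a'), (q, b')}"
        unfolding \<phi>_def by simp
    qed
    then show "\<exists>H \<subseteq> {..<m}. card H = M \<and> canonical r c H"
      using H \<open>N \<le> m\<close> by (intro exI[of _ H]) auto
  qed
qed

section \<open>Copies of the parts\<close>

(* The copies of a part are vertices of the form (p, a) with a taken from the block of p inside the
   sorted set H, so matched parts share their indices and their copies of level 0 are matched. *)
definition copy :: "nat set \<Rightarrow> nat \<Rightarrow> nat \<Rightarrow> nat \<Rightarrow> nat \<times> nat" where
  "copy H T s p = (p, sorted_list_of_set H ! (block p * T + s))"

definition reduced_colouring :: "((nat \<times> nat) set \<Rightarrow> nat) \<Rightarrow> nat set \<Rightarrow> nat \<Rightarrow> nat set \<Rightarrow> nat" where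
  "reduced_colouring c H T X = c (copy H T 0 ` X)"

lemma fst_copy [simp]: "fst (copy H T s p) = p"
  by (simp add: copy_def)

context
  fixes r m T :: nat and H :: "nat set"
  assumes H_below: "H \<subseteq> {..<m}" and card_H: "card H = (2 ^ r + 2) * T"
begin

lemma copy_index_less:
  assumes "p \<in> parts r" "s < T"
  shows "block p * T + s < card H"
proof -
  have "block p \<le> 2 ^ r + 1"
    using assms(1) unfolding block_def by auto
  then have "(block p + 1) * T \<le> (2 ^ r + 2) * T"
    by (intro mult_le_mono1) simp
  then show ?thesis
    using assms(2) card_H by simp
qed

lemma copy_less_copy:
  assumes "q \<in> parts r" "s' < T" "block p * T + s < block q * T + s'"
  shows "snd (copy H T s p) < snd (copy H T s' q)"
  using sorted_wrt_nth_less[OF strict_sorted_list_of_set assms(3)] copy_index_less[OF assms(1,2)]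
  unfolding copy_def by simp

lemma copy_in_H:
  assumes "p \<in> parts r" "s < T"
  shows "snd (copy H T s p) \<in> H"
proof -
  have "finite H"
    using H_below finite_subset by blast
  then show ?thesis
    using nth_mem[of "block p * T + s" "sorted_list_of_set H"] copy_index_less[OF assms]
    unfolding copy_def by simp
qed

lemma copy_less_m: "p \<in> parts r \<Longrightarrow> s < T \<Longrightarrow> snd (copy H T s p) < m"
  using copy_in_H H_below by blast

lemma copy_in_H_verts: "p \<in> parts r \<Longrightarrow> s < T \<Longrightarrow> copy H T s p \<in> H_verts m r"
  using copy_less_m[of p s] unfolding H_verts_def by (simp add: mem_Times_iff)

lemma copy_eq_copy_iff:
  assumes "p \<in> parts r" "s < T" "s' < T"
  shows "copy H T s p = copy H T s' q \<longleftrightarrow> p = q \<and> s = s'"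
proof
  assume eq: "copy H T s p = copy H T s' q"
  then have "p = q"
    using fst_copy by metis
  moreover have "s = s'"
    using copy_less_copy[OF assms(1,3), of p s] copy_less_copy[OF assms(1,2), of p s'] eq \<open>p = q\<close>
    by (cases s s' rule: linorder_cases) auto
  ultimately show "p = q \<and> s = s'" ..
qed simp

lemma copy_less_copy_if_block_less:
  assumes "q \<in> parts r" "block p < block q" "s < T" "s' < T"
  shows "snd (copy H T s p) < snd (copy H T s' q)"
proof (rule copy_less_copy[OF assms(1,4)])
  have "block p * T + s < (block p + 1) * T"
    using assms(3) by simp
  also have "\<dots> \<le> block q * T"
    using assms(2) by (intro mult_le_mono1) simp
  finally show "block p * T + s < block q * T + s'"
    by simp
qed

lemma copies_edge:
  assumes "canonical r c H" "p \<in> parts r" "q \<in> parts r" "p \<noteq> q" "s < T" "s' < T"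
    and "block p \<noteq> block q \<or> s = 0 \<and> s' = 0"
  shows "H_adj m r (copy H T s p) (copy H T s' q) \<and>
    c {copy H T s p, copy H T s' q} = reduced_colouring c H T {p, q}"
proof (cases "block p = block q")
  case True
  then have "s = 0" "s' = 0" "snd (copy H T 0 p) = snd (copy H T 0 q)"
    using assms(7) unfolding copy_def by auto
  moreover have "H_adj m r (p, snd (copy H T 0 p)) (q, snd (copy H T 0 p))"
    using H_adj_same_index[OF assms(2-4) copy_less_m[OF assms(2)]] assms(5) by simp
  ultimately show ?thesis
    unfolding reduced_colouring_def by (simp add: copy_def)
next
  case False
  have T: "0 < T"
    using assms(5) by simp
  have "H_adj m r (p, snd (copy H T s p)) (q, snd (copy H T s' q))"
    by (rule H_adj_if_blocks_differ[OF assms(2,3) False copy_less_m[OF assms(2,5)] copy_less_m[OF assms(3,6)]])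
  then have "H_adj m r (copy H T s p) (copy H T s' q)"
    by (simp add: copy_def)
  moreover have "c {copy H T s p, copy H T s' q} = c {copy H T 0 p, copy H T 0 q}"
  proof (cases "block p < block q")
    case True
    have "c {(p, snd (copy H T s p)), (q, snd (copy H T s' q))} =
        c {(p, snd (copy H T 0 p)), (q, snd (copy H T 0 q))}"
      using assms(2,3,5,6) T
      by (intro canonicalD[OF assms(1-3) False] copy_in_H copy_less_copy_if_block_less True)
    then show ?thesis
      by (simp add: copy_def)
  next
    case False
    then have "block q < block p"
      using \<open>block p \<noteq> block q\<close> by simp
    have "c {(q, snd (copy H T s' q)), (p, snd (copy H T s p))} =
        c {(q, snd (copy H T 0 q)), (p, snd (copy H T 0 p))}"
      using assms(2,3,5,6) T \<open>block p \<noteq> block q\<close>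
      by (intro canonicalD[OF assms(1,3,2)] copy_in_H copy_less_copy_if_block_less \<open>block q < block p\<close>) auto
    then show ?thesis
      by (simp add: copy_def insert_commute)
  qed
  ultimately show ?thesis
    unfolding reduced_colouring_def by simp
qed

lemma reduced_colouring_less:
  assumes "\<forall>u v. H_adj m r u v \<longrightarrow> c {u, v} < r" "canonical r c H" "0 < T"
    and "p \<in> parts r" "q \<in> parts r" "p \<noteq> q"
  shows "reduced_colouring c H T {p, q} < r"
proof -
  have "H_adj m r (copy H T 0 p) (copy H T 0 q)"
    and "c {copy H T 0 p, copy H T 0 q} = reduced_colouring c H T {p, q}"
    using copies_edge[OF assms(2,4-6) assms(3) assms(3)] by auto
  then show ?thesis
    using assms(1) by metis
qed

lemma is_cycle_lifted_zigzag:
  assumes canon: "canonical r c H"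
    and cycle: "is_cycle (colour_class (parts r) (reduced_colouring c H T) col) y k"
    and crossing: "block (y (k - 1)) \<noteq> block (y 0)" and "n < T"
  shows "is_cycle (\<lambda>u v. H_adj m r u v \<and> c {u, v} = col)
    (zigzag (\<lambda>j. copy H T 0 (y j)) k (\<lambda>i. copy H T (Suc i) (y 0)) (\<lambda>i. copy H T (Suc i) (y (k - 1))))
    (k + 2 * n)"
proof (rule is_cycle_zigzag)
  \<comment> \<open>the closing edge joins two blocks, so all copies of its endpoints are joined in colour col\<close>
  define F where "F = (\<lambda>u v. H_adj m r u v \<and> c {u, v} = col)"
  have "0 < k"
    using crossing by (cases k) auto
  then show "0 < k" .
  have edge: "colour_class (parts r) (reduced_colouring c H T) col (y j) (y (Suc j mod k))" if "j < k" for j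
    using cycle that unfolding is_cycle_def by blast
  then have y_parts: "y j \<in> parts r" if "j < k" for j
    using that unfolding colour_class_def by blast
  have last_edge: "y (k - 1) \<noteq> y 0" "reduced_colouring c H T {y 0, y (k - 1)} = col"
    using edge[of "k - 1"] \<open>0 < k\<close> unfolding colour_class_def by (auto simp: insert_commute)
  have lift_edge: "F (copy H T s p) (copy H T s' q)"
    if "p \<in> parts r" "q \<in> parts r" "p \<noteq> q" "s < T" "s' < T"
      "block p \<noteq> block q \<or> s = 0 \<and> s' = 0" "reduced_colouring c H T {p, q} = col" for p q s s'
    using copies_edge[OF canon that(1-6)] that(7) unfolding F_def by simp
  show "inj_on (\<lambda>j. copy H T 0 (y j)) {..<k}"
    "inj_on (\<lambda>i. copy H T (Suc i) (y 0)) {..<n}" "inj_on (\<lambda>i. copy H T (Suc i) (y (k - 1))) {..<n}"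
    using cycle y_parts \<open>0 < k\<close> \<open>n < T\<close> copy_eq_copy_iff unfolding is_cycle_def inj_on_def by auto
  show "(\<lambda>j. copy H T 0 (y j)) ` {..<k} \<inter> (\<lambda>i. copy H T (Suc i) (y 0)) ` {..<n} = {}"
    "(\<lambda>j. copy H T 0 (y j)) ` {..<k} \<inter> (\<lambda>i. copy H T (Suc i) (y (k - 1))) ` {..<n} = {}"
    "(\<lambda>i. copy H T (Suc i) (y 0)) ` {..<n} \<inter> (\<lambda>i. copy H T (Suc i) (y (k - 1))) ` {..<n} = {}"
    using y_parts \<open>0 < k\<close> \<open>n < T\<close> last_edge(1) copy_eq_copy_iff by auto
  show "F (copy H T 0 (y j)) (copy H T 0 (y (Suc j)))" if "Suc j < k" for j
    using edge[of j] that y_parts[of j] y_parts[of "Suc j"] \<open>n < T\<close>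
    unfolding colour_class_def by (intro lift_edge) auto
  show "F u v \<and> F v u"
    if u: "u \<in> insert (copy H T 0 (y 0)) ((\<lambda>i. copy H T (Suc i) (y 0)) ` {..<n})"
      and v: "v \<in> insert (copy H T 0 (y (k - 1))) ((\<lambda>i. copy H T (Suc i) (y (k - 1))) ` {..<n})" for u v
  proof -
    obtain s where s: "u = copy H T s (y 0)" "s < T"
      using u \<open>n < T\<close> by auto
    obtain s' where s': "v = copy H T s' (y (k - 1))" "s' < T"
      using v \<open>n < T\<close> by auto
    have "{y (k - 1), y 0} = {y 0, y (k - 1)}"
      by auto
    then show ?thesis
      using lift_edge[of "y 0" "y (k - 1)" s s'] lift_edge[of "y (k - 1)" "y 0" s' s]
        y_parts \<open>0 < k\<close> last_edge crossing s s' by auto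
  qed
qed

lemma has_mono_cycle_if_reduced_cycle:
  assumes "canonical r c H"
    and cycle: "is_cycle (colour_class (parts r) (reduced_colouring c H T) col) y k"
    and "block (y (k - 1)) \<noteq> block (y 0)" "k \<le> l" "even (l - k)" "l < k + 2 * T"
  shows "has_mono_cycle (H_verts m r) (H_adj m r) c l"
proof -
  define n where "n = (l - k) div 2"
  have l: "l = k + 2 * n"
    using \<open>k \<le> l\<close> \<open>even (l - k)\<close> unfolding n_def by simp
  then have "n < T"
    using \<open>l < k + 2 * T\<close> by simp
  have "y j \<in> parts r" if "j < k" for j
    using cycle that unfolding is_cycle_def colour_class_def by blast
  then have "(\<lambda>j. copy H T 0 (y j)) ` {..<k} \<union> (\<lambda>i. copy H T (Suc i) (y 0)) ` {..<n}
      \<union> (\<lambda>i. copy H T (Suc i) (y (k - 1))) ` {..<n} \<subseteq> H_verts m r"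
    using \<open>n < T\<close> \<open>block (y (k - 1)) \<noteq> block (y 0)\<close> copy_in_H_verts by (cases k) auto
  then have "zigzag (\<lambda>j. copy H T 0 (y j)) k (\<lambda>i. copy H T (Suc i) (y 0))
      (\<lambda>i. copy H T (Suc i) (y (k - 1))) ` {..<k + 2 * n} \<subseteq> H_verts m r"
    by (rule subset_trans[OF zigzag_image])
  then show ?thesis
    unfolding l by (rule has_mono_cycleI[OF _ is_cycle_lifted_zigzag[OF assms(1-3) \<open>n < T\<close>]])
qed

lemma has_mono_cycle_if_canonical:
  assumes c: "\<forall>u v. H_adj m r u v \<longrightarrow> c {u, v} < r" and canon: "canonical r c H"
    and "2 ^ r + 1 \<le> l" "odd l" "l \<le> 2 * T"
  shows "has_mono_cycle (H_verts m r) (H_adj m r) c l"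
proof -
  let ?\<kappa> = "reduced_colouring c H T"
  have "0 < T"
    using \<open>odd l\<close> \<open>l \<le> 2 * T\<close> by (cases T) auto
  have "finite (parts r)" "2 ^ r < card (parts r)"
    by simp_all
  moreover have "?\<kappa> {p, q} < r" if "p \<in> parts r" "q \<in> parts r" "p \<noteq> q" for p q
    using reduced_colouring_less[OF c canon \<open>0 < T\<close> that] .
  ultimately obtain col y k where "odd k" "3 \<le> k" "k \<le> card (parts r)"
      and cycle: "is_cycle (colour_class (parts r) ?\<kappa> col) y k"
    by (rule odd_cycle_in_coloured_complete_graph)
  obtain y' where "is_cycle (colour_class (parts r) ?\<kappa> col) y' k" "block (y' (k - 1)) \<noteq> block (y' 0)"
    by (rule is_cycle_rotate_to_crossing_edge[OF cycle \<open>3 \<le> k\<close> block_at_most_two])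
  moreover have "k \<le> l" "even (l - k)" "l < k + 2 * T"
    using \<open>k \<le> card (parts r)\<close> \<open>odd k\<close> \<open>3 \<le> k\<close> assms(3-5) by auto
  ultimately show ?thesis
    by (rule has_mono_cycle_if_reduced_cycle[OF canon])
qed

end

theorem lemma3p6:
  fixes r l :: nat
  assumes "r \<ge> 1" and "l \<ge> 2^r + 1" and "odd l"
  shows "\<exists>m0. \<forall>m\<ge>m0. cycle_ramsey (H_verts m r) (H_adj m r) l r"
proof -
  from canonical_subset_exists[of r "(2 ^ r + 2) * l"]
  obtain N where N: "\<forall>m\<ge>N. \<forall>c. (\<forall>u v. H_adj m r u v \<longrightarrow> c {u, v} < r) \<longrightarrow>
      (\<exists>H \<subseteq> {..<m}. card H = (2 ^ r + 2) * l \<and> canonical r c H)" ..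
  have "cycle_ramsey (H_verts m r) (H_adj m r) l r" if "N \<le> m" for m
    unfolding cycle_ramsey_def
  proof (intro allI impI)
    fix c assume c: "\<forall>u v. H_adj m r u v \<longrightarrow> c {u, v} < r"
    then obtain H where "H \<subseteq> {..<m}" "card H = (2 ^ r + 2) * l" "canonical r c H"
      using N \<open>N \<le> m\<close> by blast
    then show "has_mono_cycle (H_verts m r) (H_adj m r) c l"
      using has_mono_cycle_if_canonical c assms(2,3) by simp
  qed
  then show ?thesis
    by blast
qed

end
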